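(* If $\iota$ is of odd type with patching element $\gamma$, then there exists a root $\delta\in\Lambda$ ($\delta^2=-2$) such that $\delta_{\mathbb K_\gamma}^2=-1$ and $\delta_{\mathbb E_\gamma}^2=-1$, where $\delta=\delta_{\mathbb K_\gamma}+\delta_{\mathbb E_\gamma}$ is the decomposition in $\mathbb K_\gamma^\vee\oplus\mathbb E_\gamma^\vee$.
   Context: $\Lambda=\mathbb U(2)\oplus\mathbb U\oplus\mathbb E_8(2)$ (Enriques lattice). $\iota$ is a fixed-point-free involution of $K_{\tau,\tau'}=\mathrm{Km}(E_\tau\times E_{\tau'})$ with $\mathbf K\subset H^2(K_{\tau,\tau'},\mathbb Z)_-$, $\mathbf K\cong\mathbb U(2)\oplus\mathbb U(2)$ the image of $H^1(E_\tau,\mathbb Z)\otimes H^1(E_{\tau'},\mathbb Z)$; $\alpha$ a marking with $\alpha(H^2_-)=\Lambda$; $\mathbb K_\gamma=\alpha(\mathbf K)$ and $\mathbb E_\gamma$ its orthogonal complement in $\Lambda$ ($\cong\mathbb E_8(2)$). Then $\Lambda=\mathbb Z(d_1+d_2)+\mathbb K_\gamma\oplus\mathbb E_\gamma$ with $d_1\in\mathbb K_\gamma^\vee\setminus\mathbb K_\gamma$, $d_2\in\mathbb E_\gamma^\vee\setminus\mathbb E_\gamma$; the class $\gamma=\bar d_1\in A_{\mathbb K_\gamma}=A_{\mathbf K}$ is the patching element of $\iota$, and $\iota$ is of odd type if $q_{\mathbf K}(\gamma)=1\in\mathbb Z/2$ (i.e. $d_1^2$ is odd), of even type if $q_{\mathbf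 K}(\gamma)=0$. *)

theory Defs
  imports Complex_Main
begin

text \<open>Vectors of the rational/real hull of the Enriques lattice: functions nat => real
  supported on indices 0..11.  Coordinates 0,1 span U(2), 2,3 span U, 4..11 span E8(2)
  (E8 taken negative definite, so that roots have square -2).\<close>

definition E8_edge :: "nat \<Rightarrow> nat \<Rightarrow> bool" where
  "E8_edge i j \<longleftrightarrow> {i, j} \<in> {{0,1},{1,2},{2,3},{3,4},{4,5},{5,6},{2,7}}"

definition gram_E8 :: "nat \<Rightarrow> nat \<Rightarrow> int" where
  "gram_E8 i j = (if i = j then -2 else if E8_edge i j then 1 else 0)"

definition gram_U :: "nat \<Rightarrow> nat \<Rightarrow> int" where
  "gram_U i j = (if i \<noteq> j then 1 else 0)"

definition gram_Lambda :: "nat \<Rightarrow> nat \<Rightarrow> int" where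
  "gram_Lambda i j =
     (if i < 2 \<and> j < 2 then 2 * gram_U i j
      else if 2 \<le> i \<and> i < 4 \<and> 2 \<le> j \<and> j < 4 then gram_U (i - 2) (j - 2)
      else if 4 \<le> i \<and> i < 12 \<and> 4 \<le> j \<and> j < 12 then 2 * gram_E8 (i - 4) (j - 4)
      else 0)"

definition gram_U2U2 :: "nat \<Rightarrow> nat \<Rightarrow> int" where
  "gram_U2U2 i j =
     (if i < 2 \<and> j < 2 then 2 * gram_U i j
      else if 2 \<le> i \<and> i < 4 \<and> 2 \<le> j \<and> j < 4 then 2 * gram_U (i - 2) (j - 2)
      else 0)"

definition gram_E8_2 :: "nat \<Rightarrow> nat \<Rightarrow> int" where
  "gram_E8_2 i j = 2 * gram_E8 i j"

definition bil :: "(nat \<Rightarrow> real) \<Rightarrow> (nat \<Rightarrow> real) \<Rightarrow> real" where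
  "bil x y = (\<Sum>i<12. \<Sum>j<12. x i * of_int (gram_Lambda i j) * y j)"

definition Lam :: "(nat \<Rightarrow> real) set" where
  "Lam = {x. (\<forall>i<12. x i \<in> \<int>) \<and> (\<forall>i\<ge>12. x i = 0)}"

definition zspan :: "(nat \<Rightarrow> nat \<Rightarrow> real) \<Rightarrow> nat \<Rightarrow> (nat \<Rightarrow> real) set" where
  "zspan v n = {x. \<exists>c :: nat \<Rightarrow> int. x = (\<lambda>t. \<Sum>i<n. of_int (c i) * v i t)}"

definition rspan :: "(nat \<Rightarrow> nat \<Rightarrow> real) \<Rightarrow> nat \<Rightarrow> (nat \<Rightarrow> real) set" where
  "rspan v n = {x. \<exists>c :: nat \<Rightarrow> real. x = (\<lambda>t. \<Sum>i<n. c i * v i t)}"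

definition dual_lat :: "(nat \<Rightarrow> nat \<Rightarrow> real) \<Rightarrow> nat \<Rightarrow> (nat \<Rightarrow> real) set" where
  "dual_lat v n = {x \<in> rspan v n. \<forall>y \<in> zspan v n. bil x y \<in> \<int>}"

definition basis_with_gram ::
  "(nat \<Rightarrow> real) set \<Rightarrow> (nat \<Rightarrow> nat \<Rightarrow> real) \<Rightarrow> nat \<Rightarrow> (nat \<Rightarrow> nat \<Rightarrow> int) \<Rightarrow> bool" where
  "basis_with_gram L v n G \<longleftrightarrow>
     (\<forall>i<n. v i \<in> Lam) \<and> L = zspan v n \<and>
     (\<forall>c :: nat \<Rightarrow> real. (\<lambda>t. \<Sum>i<n. c i * v i t) = (\<lambda>t. 0) \<longrightarrow> (\<forall>i<n. c i = 0)) \<and>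
     (\<forall>i<n. \<forall>j<n. bil (v i) (v j) = of_int (G i j))"

definition orth_compl :: "(nat \<Rightarrow> real) set \<Rightarrow> (nat \<Rightarrow> real) set" where
  "orth_compl K = {x \<in> Lam. \<forall>k \<in> K. bil x k = 0}"

end

theory Submission
  imports Defs
begin

text \<open>
  Write \<open>K\<close> for \<open>U(2) \<oplus> U(2)\<close> and \<open>E\<close> for \<open>E8(2)\<close>. Both Gram matrices are twice a
  unimodular integral matrix, so the dual lattice is \<open>1/2\<close> times the lattice: an element of the
  dual is \<open>(1/2) \<Sum> A\<^sub>i v\<^sub>i\<close> with integral \<open>A\<close>, its norm is \<open>q(A)/4\<close>, and moving it within
  its coset modulo the lattice means changing \<open>A\<close> by even vectors.

  Since \<open>\<Lambda>\<close> is even and \<open>K \<perp> E\<close>, an odd \<open>d\<^sub>1\<^sup>2\<close> forces an odd \<open>d\<^sub>2\<^sup>2\<close>. In \<open>d\<^sub>1 + K\<close> one finds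
  a vector of norm \<open>-1\<close> by hand: \<open>a\<^sub>0a\<^sub>1 + a\<^sub>2a\<^sub>3\<close> odd admits \<open>b \<equiv> a (mod 2)\<close> with
  \<open>b\<^sub>0b\<^sub>1 + b\<^sub>2b\<^sub>3 = -1\<close>. In \<open>d\<^sub>2 + E\<close> it comes from the fact that every class of \<open>E8/2E8\<close>
  of odd half-norm contains a root, which is checked against the list of the 120 positive roots.
  The sum \<open>\<delta>\<close> of the two vectors lies in \<open>\<Lambda>\<close> by the gluing and has norm \<open>-2\<close>.
\<close>

definition lincomb :: "(nat \<Rightarrow> real) \<Rightarrow> (nat \<Rightarrow> nat \<Rightarrow> real) \<Rightarrow> nat \<Rightarrow> nat \<Rightarrow> real" where
  "lincomb c v n = (\<lambda>t. \<Sum>i<n. c i * v i t)"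

lemma zspan_eq: "zspan v n = {lincomb (\<lambda>i. of_int (c i)) v n | c. True}"
  unfolding zspan_def lincomb_def by blast

lemma rspan_eq: "rspan v n = {lincomb c v n | c. True}"
  unfolding rspan_def lincomb_def by blast

lemma lincomb_in_zspan: "lincomb (\<lambda>i. of_int (c i)) v n \<in> zspan v n"
  unfolding zspan_eq by blast

lemma basis_in_zspan:
  assumes "i < n"
  shows "v i \<in> zspan v n"
proof -
  have "(\<Sum>k<n. of_int (if k = i then 1 else 0) * v k t) = (\<Sum>k<n. if k = i then v k t else 0)" for t
    by (rule sum.cong) auto
  then have "lincomb (\<lambda>k. of_int (if k = i then 1 else 0)) v n = v i"
    using assms by (simp add: lincomb_def)
  then show ?thesis
    by (metis lincomb_in_zspan)
qed

lemma zero_in_zspan: "(\<lambda>t. 0) \<in> zspan v n"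
  using lincomb_in_zspan[of "\<lambda>_. 0" v n] by (simp add: lincomb_def)

lemma basis_with_gram_zspan: "basis_with_gram L v n G \<Longrightarrow> L = zspan v n"
  unfolding basis_with_gram_def by blast

lemma basis_with_gram_bil:
  "basis_with_gram L v n G \<Longrightarrow> i < n \<Longrightarrow> j < n \<Longrightarrow> bil (v i) (v j) = of_int (G i j)"
  unfolding basis_with_gram_def by blast

lemma gram_E8_sym: "gram_E8 i j = gram_E8 j i"
  unfolding gram_E8_def E8_edge_def by (simp add: insert_commute)

lemma gram_Lambda_sym: "gram_Lambda i j = gram_Lambda j i"
  unfolding gram_Lambda_def gram_U_def using gram_E8_sym by auto

lemma bil_sym: "bil x y = bil y x"
  unfolding bil_def
  by (subst sum.swap) (simp add: gram_Lambda_sym mult.commute mult.left_commute)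

lemma bil_add_left: "bil (\<lambda>t. x t + y t) z = bil x z + bil y z"
  by (simp add: bil_def algebra_simps sum.distrib)

lemma bil_add_self_orthogonal:
  assumes "bil x y = 0"
  shows "bil (\<lambda>t. x t + y t) (\<lambda>t. x t + y t) = bil x x + bil y y"
proof -
  have "bil (\<lambda>t. x t + y t) (\<lambda>t. x t + y t) = bil x x + bil y x + (bil x y + bil y y)"
    by (simp add: bil_add_left bil_sym[of x "\<lambda>t. x t + y t"] bil_sym[of y "\<lambda>t. x t + y t"])
  then show ?thesis
    using assms bil_sym[of y x] by simp
qed

lemma bil_lincomb_left: "bil (lincomb c v n) w = (\<Sum>i<n. c i * bil (v i) w)"
  unfolding bil_def lincomb_def
  by (simp add: sum_distrib_left sum_distrib_right mult.assoc sum.swap[of _ "{..<n}"])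

lemma bil_lincomb_right: "bil w (lincomb c v n) = (\<Sum>i<n. c i * bil w (v i))"
  by (subst bil_sym) (simp add: bil_lincomb_left bil_sym[of "v _"])

lemma bil_lincomb_lincomb:
  assumes "basis_with_gram L v n G"
  shows "bil (lincomb c v n) (lincomb c' v n) = (\<Sum>i<n. \<Sum>j<n. c i * of_int (G i j) * c' j)"
  unfolding bil_lincomb_left
  by (intro sum.cong refl)
    (simp add: bil_lincomb_right basis_with_gram_bil[OF assms] sum_distrib_left mult_ac)

lemma orth_compl_rspan_orthogonal:
  assumes "basis_with_gram K u n G" "basis_with_gram (orth_compl K) w m H"
    and "x \<in> rspan u n" "y \<in> rspan w m"
  shows "bil x y = 0"
proof -
  have "bil (u i) (w j) = 0" if "i < n" "j < m" for i j
  proof -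
    have "u i \<in> K" "w j \<in> orth_compl K"
      using basis_in_zspan[OF that(1)] basis_in_zspan[OF that(2)]
        basis_with_gram_zspan[OF assms(1)] basis_with_gram_zspan[OF assms(2)] by simp_all
    then show ?thesis
      unfolding orth_compl_def using bil_sym by auto
  qed
  moreover obtain c c' where "x = lincomb c u n" "y = lincomb c' w m"
    using assms(3,4) unfolding rspan_eq by blast
  ultimately show ?thesis
    by (simp add: bil_lincomb_left bil_lincomb_right)
qed

definition qform :: "(nat \<Rightarrow> nat \<Rightarrow> int) \<Rightarrow> nat \<Rightarrow> (nat \<Rightarrow> int) \<Rightarrow> int" where
  "qform G n a = (\<Sum>i<n. \<Sum>j<n. a i * G i j * a j)"

lemma qform_add:
  assumes "\<And>i j. G i j = G j i"
  shows "qform G n (\<lambda>i. a i + b i) = qform G n a + 2 * (\<Sum>i<n. \<Sum>j<n. a i * G i j * b j) + qform G n b"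
proof -
  have "(\<Sum>i<n. \<Sum>j<n. b i * G i j * a j) = (\<Sum>i<n. \<Sum>j<n. a i * G i j * b j)"
    by (subst sum.swap) (simp add: assms mult_ac)
  then show ?thesis
    unfolding qform_def by (simp add: algebra_simps sum.distrib)
qed

lemma qform_double: "qform G n (\<lambda>i. 2 * a i) = 4 * qform G n a"
  unfolding qform_def by (simp add: sum_distrib_left mult_ac)

lemma qform_cong_mod4:
  assumes "\<And>i j. G i j = G j i" "\<forall>i<n. even (a i - b i)"
  shows "qform G n a mod 4 = qform G n b mod 4"
proof -
  define m where "m i = (a i - b i) div 2" for i
  have "qform G n a = qform G n (\<lambda>i. b i + 2 * m i)"
    unfolding qform_def m_def using assms(2) by (intro sum.cong refl) auto
  also have "\<dots> = qform G n b + 4 * ((\<Sum>i<n. \<Sum>j<n. b i * G i j * m j) + qform G n m)"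
    unfolding qform_add[OF assms(1)] qform_double by (simp add: sum_distrib_left algebra_simps)
  finally show ?thesis
    by (simp only: mod_mult_self2)
qed

lemma qform_even:
  assumes "\<And>i j. G i j = G j i" "\<And>i. even (G i i)"
  shows "even (qform G n a)"
proof (induction n)
  case 0
  then show ?case
    by (simp add: qform_def)
next
  case (Suc n)
  have "qform G (Suc n) a = qform G n a + 2 * (\<Sum>j<n. a n * G n j * a j) + a n * G n n * a n"
    by (simp add: qform_def sum.distrib assms(1) mult_ac)
  then show ?case
    using Suc assms(2)[of n] by simp
qed

lemma Lam_bil_even:
  assumes "z \<in> Lam"
  shows "\<exists>w::int. bil z z = of_int (2 * w)"
proof -
  define Z where "Z i = \<lfloor>z i\<rfloor>" for i
  have "z i = of_int (Z i)" if "i < 12" for i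
    using assms that unfolding Lam_def Z_def by (simp add: of_int_floor)
  then have "bil z z = of_int (qform gram_Lambda 12 Z)"
    unfolding bil_def qform_def by simp
  moreover have "even (qform gram_Lambda 12 Z)"
    by (rule qform_even) (simp_all add: gram_Lambda_sym gram_Lambda_def gram_U_def gram_E8_def)
  ultimately show ?thesis
    by (auto elim: evenE)
qed

subsection \<open>Cosets of a dual lattice that is half the lattice\<close>

lemma dual_lat_half_integral:
  assumes L: "basis_with_gram L v n G"
    and G_inv: "\<And>i k. i < n \<Longrightarrow> k < n \<Longrightarrow> (\<Sum>j<n. G i j * M j k) = (if i = k then 2 else 0)"
    and d: "d \<in> dual_lat v n"
  shows "\<exists>A. d = lincomb (\<lambda>i. of_int (A i) / 2) v n"
proof -
  obtain c where c: "d = lincomb c v n"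
    using d unfolding dual_lat_def rspan_eq by blast
  have "2 * c k \<in> \<int>" if "k < n" for k
  proof -
    have "(\<Sum>j<n. bil d (v j) * of_int (M j k))
        = (\<Sum>j<n. \<Sum>i<n. c i * of_int (G i j) * of_int (M j k))"
      unfolding c bil_lincomb_left by (simp add: basis_with_gram_bil[OF L] sum_distrib_right)
    also have "\<dots> = (\<Sum>i<n. c i * of_int (\<Sum>j<n. G i j * M j k))"
      by (subst sum.swap) (simp add: sum_distrib_left mult.assoc)
    also have "\<dots> = (\<Sum>i<n. if i = k then 2 * c i else 0)"
      using G_inv[OF _ that] by (intro sum.cong) auto
    also have "\<dots> = 2 * c k"
      using that by simp
    finally have "2 * c k = (\<Sum>j<n. bil d (v j) * of_int (M j k))" ..
    moreover have "bil d (v j) \<in> \<int>" if "j < n" for j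
      using d basis_in_zspan[OF that] unfolding dual_lat_def by blast
    ultimately show ?thesis
      by (auto intro!: Ints_sum Ints_mult)
  qed
  then have "d = lincomb (\<lambda>i. of_int \<lfloor>2 * c i\<rfloor> / 2) v n"
    unfolding c lincomb_def by (intro ext sum.cong) (simp_all add: of_int_floor)
  then show ?thesis
    by (rule exI[of _ "\<lambda>i. \<lfloor>2 * c i\<rfloor>"])
qed

lemma half_lincomb_in_dual_lat:
  assumes L: "basis_with_gram L v n G" and G_even: "\<And>i j. even (G i j)"
  shows "lincomb (\<lambda>i. of_int (A i) / 2) v n \<in> dual_lat v n"
proof -
  have "bil (lincomb (\<lambda>i. of_int (A i) / 2) v n) y \<in> \<int>" if y: "y \<in> zspan v n" for y
  proof -
    obtain e where e: "y = lincomb (\<lambda>i. of_int (e i)) v n"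
      using y unfolding zspan_eq by blast
    have "of_int (G i j) = (2 * of_int (G i j div 2) :: real)" for i j
      using G_even[of i j] by (metis dvd_mult_div_cancel of_int_mult of_int_numeral)
    then have "bil (lincomb (\<lambda>i. of_int (A i) / 2) v n) y
        = of_int (\<Sum>i<n. \<Sum>j<n. A i * (G i j div 2) * e j)"
      unfolding e bil_lincomb_lincomb[OF L] by simp
    then show ?thesis
      by (simp only: Ints_of_int)
  qed
  then show ?thesis
    unfolding dual_lat_def rspan_eq by blast
qed

lemma bil_half_lincomb:
  assumes "basis_with_gram L v n G"
  shows "bil (lincomb (\<lambda>i. of_int (A i) / 2) v n) (lincomb (\<lambda>i. of_int (A i) / 2) v n)
    = of_int (qform G n A) / 4"
  unfolding bil_lincomb_lincomb[OF assms] qform_def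
  by (simp add: sum_divide_distrib)

lemma half_lincomb_shift:
  assumes "\<forall>i<n. even (B i - A i)"
  shows "lincomb (\<lambda>i. of_int (B i) / 2) v n
    = (\<lambda>t. lincomb (\<lambda>i. of_int (A i) / 2) v n t + lincomb (\<lambda>i. of_int ((B i - A i) div 2)) v n t)"
  unfolding lincomb_def sum.distrib[symmetric]
  using assms by (intro ext sum.cong) (auto simp: of_int_div field_simps)

lemma dual_coset_norm_minus_one:
  assumes L: "basis_with_gram L v n G"
    and G_even: "\<And>i j. even (G i j)"
    and G_inv: "\<And>i k. i < n \<Longrightarrow> k < n \<Longrightarrow> (\<Sum>j<n. G i j * M j k) = (if i = k then 2 else 0)"
    and d: "d \<in> dual_lat v n"
    and lift: "\<And>A. bil d d = of_int (qform G n A) / 4 \<Longrightarrow>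
                 \<exists>B. (\<forall>i<n. even (B i - A i)) \<and> qform G n B = -4"
  shows "\<exists>x \<in> dual_lat v n. \<exists>k \<in> L. x = (\<lambda>t. d t + k t) \<and> bil x x = -1"
proof -
  obtain A where A: "d = lincomb (\<lambda>i. of_int (A i) / 2) v n"
    using dual_lat_half_integral[OF L G_inv d] by blast
  then obtain B where B: "\<forall>i<n. even (B i - A i)" "qform G n B = -4"
    using lift bil_half_lincomb[OF L] by blast
  let ?x = "lincomb (\<lambda>i. of_int (B i) / 2) v n"
  let ?k = "lincomb (\<lambda>i. of_int ((B i - A i) div 2)) v n"
  have "?x \<in> dual_lat v n"
    by (rule half_lincomb_in_dual_lat[OF L G_even])
  moreover have "?k \<in> L"
    unfolding basis_with_gram_zspan[OF L] by (rule lincomb_in_zspan)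
  moreover have "?x = (\<lambda>t. d t + ?k t)"
    unfolding A by (rule half_lincomb_shift[OF B(1)])
  moreover have "bil ?x ?x = -1"
    unfolding bil_half_lincomb[OF L] B(2) by simp
  ultimately show ?thesis
    by blast
qed

subsection \<open>The lattice \<open>U(2) \<oplus> U(2)\<close>\<close>

lemma qform_gram_U2U2: "qform gram_U2U2 4 a = 4 * (a 0 * a 1 + a 2 * a 3)"
  by (simp add: qform_def eval_nat_numeral gram_U2U2_def gram_U_def algebra_simps)

lemma gram_U2U2_inverse:
  "i < 4 \<Longrightarrow> k < 4 \<Longrightarrow> (\<Sum>j<4. gram_U2U2 i j * (gram_U2U2 j k div 2)) = (if i = k then 2 else 0)"
  by (auto simp: eval_nat_numeral gram_U2U2_def gram_U_def less_Suc_eq)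

lemma hyperbolic_odd_class_norm_minus_one:
  fixes a :: "nat \<Rightarrow> int"
  assumes "odd (a 0 * a 1 + a 2 * a 3)"
  shows "\<exists>b. (\<forall>i<4. even (b i - a i)) \<and> b 0 * b 1 + b 2 * b 3 = -1"
proof -
  have congruent: "\<forall>i<4. even (b i - a i)"
    if "even (b 0 - a 0)" "even (b 1 - a 1)" "even (b 2 - a 2)" "even (b 3 - a 3)" for b
    using that by (auto simp: less_Suc_eq eval_nat_numeral)
  consider "odd (a 0)" "odd (a 1)" "even (a 2)" | "odd (a 0)" "odd (a 1)" "even (a 3)"
    | "odd (a 2)" "odd (a 3)" "even (a 0)" | "odd (a 2)" "odd (a 3)" "even (a 1)"
    using assms by auto
  then show ?thesis
  proof cases
    case 1
    then show ?thesis
      by (intro exI[of _ "a(0 := 1, 1 := -1, 2 := 0)"] conjI congruent) auto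
  next
    case 2
    then show ?thesis
      by (intro exI[of _ "a(0 := 1, 1 := -1, 3 := 0)"] conjI congruent) auto
  next
    case 3
    then show ?thesis
      by (intro exI[of _ "a(2 := 1, 3 := -1, 0 := 0)"] conjI congruent) auto
  next
    case 4
    then show ?thesis
      by (intro exI[of _ "a(2 := 1, 3 := -1, 1 := 0)"] conjI congruent) auto
  qed
qed

lemma U2U2_dual_coset_norm_minus_one:
  assumes K: "basis_with_gram K v 4 gram_U2U2"
    and d: "d \<in> dual_lat v 4" and odd_norm: "bil d d = of_int m" "odd m"
  shows "\<exists>x \<in> dual_lat v 4. \<exists>k \<in> K. x = (\<lambda>t. d t + k t) \<and> bil x x = -1"
proof (rule dual_coset_norm_minus_one[OF K _ gram_U2U2_inverse d])
  show "even (gram_U2U2 i j)" for i j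
    by (simp add: gram_U2U2_def)
  fix A
  assume "bil d d = of_int (qform gram_U2U2 4 A) / 4"
  then have "(of_int m :: real) = of_int (A 0 * A 1 + A 2 * A 3)"
    using odd_norm(1) by (simp add: qform_gram_U2U2)
  then have "m = A 0 * A 1 + A 2 * A 3"
    by (simp only: of_int_eq_iff)
  then have "odd (A 0 * A 1 + A 2 * A 3)"
    using odd_norm(2) by simp
  then obtain B where "\<forall>i<4. even (B i - A i)" "B 0 * B 1 + B 2 * B 3 = -1"
    using hyperbolic_odd_class_norm_minus_one by blast
  then show "\<exists>B. (\<forall>i<4. even (B i - A i)) \<and> qform gram_U2U2 4 B = -4"
    by (auto simp: qform_gram_U2U2)
qed

subsection \<open>The lattice \<open>E8(2)\<close>\<close>

lemma qform_gram_E8_2: "qform gram_E8_2 n a = 2 * qform gram_E8 n a"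
  by (simp add: qform_def gram_E8_2_def sum_distrib_left mult_ac)

text \<open>Minus the inverse Cartan matrix of \<open>E8\<close>; it is integral because \<open>E8\<close> is unimodular.\<close>

definition gram_E8_inverse :: "nat \<Rightarrow> nat \<Rightarrow> int" where
  "gram_E8_inverse i j = - [[4, 7, 10, 8, 6, 4, 2, 5], [7, 14, 20, 16, 12, 8, 4, 10],
     [10, 20, 30, 24, 18, 12, 6, 15], [8, 16, 24, 20, 15, 10, 5, 12], [6, 12, 18, 15, 12, 8, 4, 9],
     [4, 8, 12, 10, 8, 6, 3, 6], [2, 4, 6, 5, 4, 3, 2, 3], [5, 10, 15, 12, 9, 6, 3, 8]] ! i ! j"

lemma gram_E8_inverse_correct:
  "list_all (\<lambda>i. list_all (\<lambda>k. (\<Sum>j<8. gram_E8 i j * gram_E8_inverse j k) = (if i = k then 1 else 0))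
     [0..<8]) [0..<8]"
  by code_simp

lemma gram_E8_2_inverse:
  "i < 8 \<Longrightarrow> k < 8 \<Longrightarrow> (\<Sum>j<8. gram_E8_2 i j * gram_E8_inverse j k) = (if i = k then 2 else 0)"
  using gram_E8_inverse_correct
  by (simp add: list_all_iff gram_E8_2_def sum_distrib_left[symmetric] mult.assoc)

text \<open>Coordinates with respect to the simple roots \<open>0, \<dots>, 7\<close> of the Dynkin diagram \<open>E8_edge\<close>.\<close>

definition E8_positive_roots :: "int list list" where
  "E8_positive_roots = [
     [1,0,0,0,0,0,0,0], [0,1,0,0,0,0,0,0], [1,1,0,0,0,0,0,0], [0,0,1,0,0,0,0,0], [0,1,1,0,0,0,0,0], [1,1,1,0,0,0,0,0],
     [0,0,0,1,0,0,0,0], [0,0,1,1,0,0,0,0], [0,1,1,1,0,0,0,0], [1,1,1,1,0,0,0,0], [0,0,0,0,1,0,0,0], [1,2,3,2,1,0,0,2],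
     [0,0,0,1,1,0,0,0], [0,0,1,1,1,0,0,0], [0,1,1,1,1,0,0,0], [1,1,1,1,1,0,0,0], [0,0,0,0,0,1,0,0], [1,2,3,2,2,1,0,2],
     [1,2,4,3,2,1,0,2], [2,3,4,3,2,1,0,2], [1,3,4,3,2,1,0,2], [1,2,3,3,2,1,0,2], [0,0,0,0,1,1,0,0], [1,2,3,2,1,1,0,2],
     [0,0,0,1,1,1,0,0], [0,0,1,1,1,1,0,0], [0,1,1,1,1,1,0,0], [1,1,1,1,1,1,0,0], [0,0,0,0,0,0,1,0], [1,2,3,2,2,2,1,2],
     [1,2,4,3,2,2,1,2], [2,3,4,3,2,2,1,2], [1,3,4,3,2,2,1,2], [1,2,3,3,2,2,1,2], [1,2,4,4,3,2,1,2], [2,3,4,4,3,2,1,2],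
     [1,3,4,4,3,2,1,2], [2,4,5,4,3,2,1,2], [2,3,5,4,3,2,1,2], [1,3,5,4,3,2,1,2], [1,2,4,3,3,2,1,2], [2,3,4,3,3,2,1,2],
     [1,3,4,3,3,2,1,2], [1,2,3,3,3,2,1,2], [0,0,0,0,0,1,1,0], [1,2,3,2,2,1,1,2], [1,2,4,3,2,1,1,2], [2,3,4,3,2,1,1,2],
     [1,3,4,3,2,1,1,2], [1,2,3,3,2,1,1,2], [0,0,0,0,1,1,1,0], [1,2,3,2,1,1,1,2], [0,0,0,1,1,1,1,0], [0,0,1,1,1,1,1,0],
     [0,1,1,1,1,1,1,0], [1,1,1,1,1,1,1,0], [0,0,0,0,0,0,0,1], [0,0,1,0,0,0,0,1], [0,1,1,0,0,0,0,1], [1,1,1,0,0,0,0,1],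
     [1,2,2,1,0,0,0,1], [0,1,2,1,0,0,0,1], [1,1,2,1,0,0,0,1], [0,0,1,1,0,0,0,1], [0,1,1,1,0,0,0,1], [1,1,1,1,0,0,0,1],
     [1,2,2,2,1,0,0,1], [0,1,2,2,1,0,0,1], [1,1,2,2,1,0,0,1], [1,2,3,2,1,0,0,1], [1,2,2,1,1,0,0,1], [0,1,2,1,1,0,0,1],
     [1,1,2,1,1,0,0,1], [0,0,1,1,1,0,0,1], [0,1,1,1,1,0,0,1], [1,1,1,1,1,0,0,1], [1,2,2,2,2,1,0,1], [0,1,2,2,2,1,0,1],
     [1,1,2,2,2,1,0,1], [1,2,3,2,2,1,0,1], [2,4,6,5,4,3,2,3], [1,2,3,3,2,1,0,1], [1,2,2,2,1,1,0,1], [0,1,2,2,1,1,0,1],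
     [1,1,2,2,1,1,0,1], [1,2,3,2,1,1,0,1], [1,2,2,1,1,1,0,1], [0,1,2,1,1,1,0,1], [1,1,2,1,1,1,0,1], [0,0,1,1,1,1,0,1],
     [0,1,1,1,1,1,0,1], [1,1,1,1,1,1,0,1], [1,2,2,2,2,2,1,1], [0,1,2,2,2,2,1,1], [1,1,2,2,2,2,1,1], [1,2,3,2,2,2,1,1],
     [2,4,6,5,4,2,1,3], [1,2,3,3,2,2,1,1], [2,4,6,4,3,2,1,3], [2,4,5,4,3,2,1,3], [2,3,5,4,3,2,1,3], [1,3,5,4,3,2,1,3],
     [2,4,6,5,3,2,1,3], [1,2,3,3,3,2,1,1], [1,2,2,2,2,1,1,1], [0,1,2,2,2,1,1,1], [1,1,2,2,2,1,1,1], [1,2,3,2,2,1,1,1],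
     [2,4,6,5,4,3,1,3], [1,2,3,3,2,1,1,1], [1,2,2,2,1,1,1,1], [0,1,2,2,1,1,1,1], [1,1,2,2,1,1,1,1], [1,2,3,2,1,1,1,1],
     [1,2,2,1,1,1,1,1], [0,1,2,1,1,1,1,1], [1,1,2,1,1,1,1,1], [0,0,1,1,1,1,1,1], [0,1,1,1,1,1,1,1], [1,1,1,1,1,1,1,1]]"

lemma E8_positive_roots_norm: "list_all (\<lambda>r. qform gram_E8 8 (nth r) = -2) E8_positive_roots"
  by code_simp

lemma E8_odd_classes:
  "filter (\<lambda>p. qform gram_E8 8 (nth p) mod 4 = 2) (List.n_lists 8 [0, 1])
    = map (map (\<lambda>x. x mod 2)) E8_positive_roots"
  by code_simp

lemma E8_odd_class_contains_root:
  assumes "qform gram_E8 8 a mod 4 = 2"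
  shows "\<exists>r. (\<forall>i<8. even (r i - a i)) \<and> qform gram_E8 8 r = -2"
proof -
  let ?p = "map (\<lambda>i. a i mod 2) [0..<8]"
  have "qform gram_E8 8 (nth ?p) mod 4 = qform gram_E8 8 a mod 4"
    by (rule qform_cong_mod4) (simp_all add: gram_E8_sym)
  moreover have "?p \<in> set (List.n_lists 8 [0, 1])"
    by (auto simp: set_n_lists)
  ultimately have "?p \<in> set (map (map (\<lambda>x. x mod 2)) E8_positive_roots)"
    using assms unfolding E8_odd_classes[symmetric] by simp
  then obtain r where r: "r \<in> set E8_positive_roots" "map (\<lambda>x. x mod 2) r = ?p"
    by auto
  have "length r = 8"
    using arg_cong[OF r(2), of length] by simp
  have "r ! i mod 2 = a i mod 2" if "i < 8" for i
    using arg_cong[OF r(2), of "\<lambda>xs. xs ! i"] that \<open>length r = 8\<close> by simp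
  then have "\<forall>i<8. even (r ! i - a i)"
    by (simp add: mod_eq_dvd_iff)
  moreover have "qform gram_E8 8 (nth r) = -2"
    using E8_positive_roots_norm r(1) by (simp add: list_all_iff)
  ultimately show ?thesis
    by blast
qed

lemma E8_2_dual_coset_norm_minus_one:
  assumes E: "basis_with_gram E v 8 gram_E8_2"
    and d: "d \<in> dual_lat v 8" and odd_norm: "bil d d = of_int m" "odd m"
  shows "\<exists>x \<in> dual_lat v 8. \<exists>e \<in> E. x = (\<lambda>t. d t + e t) \<and> bil x x = -1"
proof (rule dual_coset_norm_minus_one[OF E _ gram_E8_2_inverse d])
  show "even (gram_E8_2 i j)" for i j
    by (simp add: gram_E8_2_def)
  fix A
  assume "bil d d = of_int (qform gram_E8_2 8 A) / 4"
  then have "(of_int (2 * m) :: real) = of_int (qform gram_E8 8 A)"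
    using odd_norm(1) by (simp add: qform_gram_E8_2)
  then have "qform gram_E8 8 A = 2 * m"
    by (simp only: of_int_eq_iff)
  then have "qform gram_E8 8 A mod 4 = 2"
    using odd_norm(2) by (auto elim: oddE)
  then obtain B where "\<forall>i<8. even (B i - A i)" "qform gram_E8 8 B = -2"
    using E8_odd_class_contains_root by blast
  then show "\<exists>B. (\<forall>i<8. even (B i - A i)) \<and> qform gram_E8_2 8 B = -4"
    by (auto simp: qform_gram_E8_2)
qed

theorem lemma3p12:
  fixes KK EE :: "(nat \<Rightarrow> real) set"
    and kb eb :: "nat \<Rightarrow> nat \<Rightarrow> real"
    and d1 d2 :: "nat \<Rightarrow> real"
  assumes K_basis: "basis_with_gram KK kb 4 gram_U2U2"
    and E_def: "EE = orth_compl KK"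
    and E_basis: "basis_with_gram EE eb 8 gram_E8_2"
    and d1: "d1 \<in> dual_lat kb 4 - KK"
    and d2: "d2 \<in> dual_lat eb 8 - EE"
    and glue: "Lam = {(\<lambda>t. of_int m * (d1 t + d2 t) + k t + e t) | m k e.
                        (m :: int) \<in> UNIV \<and> k \<in> KK \<and> e \<in> EE}"
    and odd_type: "\<exists>n :: int. bil d1 d1 = of_int n \<and> odd n"
  shows "\<exists>\<delta> \<in> Lam. bil \<delta> \<delta> = -2 \<and>
           (\<exists>x \<in> dual_lat kb 4. \<exists>y \<in> dual_lat eb 8.
              \<delta> = (\<lambda>t. x t + y t) \<and> bil x x = -1 \<and> bil y y = -1)"
proof -
  have orth: "bil x y = 0" if "x \<in> dual_lat kb 4" "y \<in> dual_lat eb 8" for x y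
    using orth_compl_rspan_orthogonal[OF K_basis E_basis[unfolded E_def]] that
    unfolding dual_lat_def by blast
  have d1_dual: "d1 \<in> dual_lat kb 4" and d2_dual: "d2 \<in> dual_lat eb 8"
    using d1 d2 by auto
  obtain n where n: "bil d1 d1 = of_int n" "odd n"
    using odd_type by blast
  have in_Lam: "(\<lambda>t. d1 t + d2 t + k t + e t) \<in> Lam" if "k \<in> KK" "e \<in> EE" for k e
    unfolding glue using that by (intro CollectI exI[of _ "1::int"] exI[of _ k] exI[of _ e]) simp
  have "(\<lambda>t. d1 t + d2 t) \<in> Lam"
    using in_Lam zero_in_zspan basis_with_gram_zspan[OF K_basis] basis_with_gram_zspan[OF E_basis]
    by fastforce
  then obtain w where "bil (\<lambda>t. d1 t + d2 t) (\<lambda>t. d1 t + d2 t) = of_int (2 * w)"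
    using Lam_bil_even by blast
  then have "bil d2 d2 = of_int (2 * w - n)"
    using bil_add_self_orthogonal[OF orth[OF d1_dual d2_dual]] n(1) by simp
  then obtain y e where y: "y \<in> dual_lat eb 8" "e \<in> EE" "y = (\<lambda>t. d2 t + e t)" "bil y y = -1"
    using E8_2_dual_coset_norm_minus_one[OF E_basis d2_dual] n(2) by fastforce
  obtain x k where x: "x \<in> dual_lat kb 4" "k \<in> KK" "x = (\<lambda>t. d1 t + k t)" "bil x x = -1"
    using U2U2_dual_coset_norm_minus_one[OF K_basis d1_dual n] by blast
  have "(\<lambda>t. x t + y t) \<in> Lam"
    using in_Lam[OF x(2) y(2)] unfolding x(3) y(3) by (simp add: algebra_simps)
  moreover have "bil (\<lambda>t. x t + y t) (\<lambda>t. x t + y t) = -2"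
    using bil_add_self_orthogonal[OF orth[OF x(1) y(1)]] x(4) y(4) by simp
  ultimately show ?thesis
    using x(1,4) y(1,4) by blast
qed

end
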